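(* Let $n\ge 3$ and let $x_{i_1,D_1},\dots,x_{i_p,D_p}$ be partial conjugations, regarded as elements of $\mathrm{Out}^0(W_n)$. Then there exists a hypertree $\Theta\in\mathcal{HT}_n$ that carries every one of $x_{i_1,D_1},\dots,x_{i_p,D_p}$ if and only if these partial conjugations pairwise commute in $\mathrm{Out}^0(W_n)$.
   Context: $W_n=\langle a_1,\dots,a_n\mid a_1^2=\dots=a_n^2=1\rangle$ is the free product of $n$ copies of $\mathbb{Z}_2$; $[n]=\{1,\dots,n\}$. For $i\in[n]$ and a nonempty $D\subseteq[n]\setminus\{i\}$, the partial conjugation $x_{i,D}\in\mathrm{Aut}(W_n)$ sends $a_j\mapsto a_ia_ja_i$ for $j\in D$ and fixes $a_j$ for $j\notin D$. $\mathrm{Aut}^0(W_n)$ is the group of automorphisms sending each $a_j$ to a conjugate of itself (generated by partial conjugations), and $\mathrm{Out}^0(W_n)=\mathrm{Aut}^0(W_n)/\mathrm{Inn}(W_n)$. In $\mathrm{Out}^0(W_n)$ one has $x_{i,D}=x_{i,D^c}$ where $D^c=[n]\setminus(D\cup\{i\})$. A hypergraph on $[n]$ is a set $E$ of subsets (hyperedges) of $[n]$, each of size $\ge 2$. A simple walk from $v$ to $v'$ is a sequence $v=v_0,e_1,v_1,\dots,e_p,v_p=v'$ with $\{v_{t-1},v_t\}\subseteq e_t$, the $v_t$ pairwise distinct and the $e_t$ pairwise distinct. A hypertree on $[n]$ is a hypergraph on $[n]$ in which any two vertices are joined by a unique simple walk; $\mathcal{HT}_n$ is the set of hypertrees on $[n]$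 (labeled). A hypertree $\Theta$ carries $x_{i,D}$ if for every $d\in D$ and every $j\in[n]\setminus(D\cup\{i\})$ the simple walk in $\Theta$ from $d$ to $j$ passes through the vertex $i$; this depends only on the class of $x_{i,D}$ in $\mathrm{Out}^0(W_n)$. An element $\alpha\in\mathrm{Out}^0(W_n)$ is carried by $\Theta$ if it is a product of partial conjugations each carried by $\Theta$. *)

theory Defs
  imports Main
begin

text \<open>Elements of W_n are modelled by reduced words over the alphabet {1..n}:
  lists of letters with no two adjacent letters equal (the normal form in a free
  product of copies of Z2). The letter j stands for the generator a_j.\<close>

fun reduce :: "nat list \<Rightarrow> nat list" where
  "reduce [] = []"
| "reduce (x # xs) = (case reduce xs of
      [] \<Rightarrow> [x]
    | y # ys \<Rightarrow> (if x = y then ys else x # y # ys))"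

definition reduced_word :: "nat \<Rightarrow> nat list \<Rightarrow> bool" where
  "reduced_word n w \<longleftrightarrow> set w \<subseteq> {1..n} \<and> (\<forall>t. Suc t < length w \<longrightarrow> w ! t \<noteq> w ! Suc t)"

text \<open>Group multiplication; the inverse of a reduced word is its reversal.\<close>
definition wmul :: "nat list \<Rightarrow> nat list \<Rightarrow> nat list" where
  "wmul u v = reduce (u @ v)"

definition pconj :: "nat \<Rightarrow> nat set \<Rightarrow> nat list \<Rightarrow> nat list" where
  "pconj i D w = reduce (concat (map (\<lambda>j. if j \<in> D then [i, j, i] else [j]) w))"

definition is_partial_conj :: "nat \<Rightarrow> nat \<Rightarrow> nat set \<Rightarrow> bool" where
  "is_partial_conj n i D \<longleftrightarrow> i \<in> {1..n} \<and> D \<noteq> {} \<and> D \<subseteq> {1..n} - {i}"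

text \<open>Two automorphisms phi, psi commute in Out(W_n) iff phi \<circ> psi and psi \<circ> phi
  differ by an inner automorphism: phi(psi(u)) = w (psi(phi(u))) w^{-1} for all u.\<close>
definition commute_out :: "nat \<Rightarrow> nat \<Rightarrow> nat set \<Rightarrow> nat \<Rightarrow> nat set \<Rightarrow> bool" where
  "commute_out n i D k F \<longleftrightarrow>
     (\<exists>w. reduced_word n w \<and>
        (\<forall>u. reduced_word n u \<longrightarrow>
           pconj i D (pconj k F u) = wmul w (wmul (pconj k F (pconj i D u)) (rev w))))"

definition hypergraph :: "nat \<Rightarrow> nat set set \<Rightarrow> bool" where
  "hypergraph n E \<longleftrightarrow> (\<forall>e\<in>E. e \<subseteq> {1..n} \<and> card e \<ge> 2)"

text \<open>A simple walk v = v_0, e_1, v_1, ..., e_p, v_p = v': vertex list vs = [v_0..v_p],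
  edge list es = [e_1..e_p].\<close>
definition simple_walk :: "nat set set \<Rightarrow> nat \<Rightarrow> nat \<Rightarrow> nat list \<Rightarrow> nat set list \<Rightarrow> bool" where
  "simple_walk E v v' vs es \<longleftrightarrow>
     length vs = Suc (length es) \<and> hd vs = v \<and> last vs = v' \<and>
     distinct vs \<and> distinct es \<and>
     (\<forall>t < length es. es ! t \<in> E \<and> {vs ! t, vs ! Suc t} \<subseteq> es ! t)"

definition hypertree :: "nat \<Rightarrow> nat set set \<Rightarrow> bool" where
  "hypertree n E \<longleftrightarrow> hypergraph n E \<and>
     (\<forall>v\<in>{1..n}. \<forall>v'\<in>{1..n}. \<exists>!p. simple_walk E v v' (fst p) (snd p))"

text \<open>Theta carries x_{i,D}: for every d in D and j in [n] - (D \<union> {i}), the simple walk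
  from d to j passes through i (in a hypertree this walk is unique).\<close>
definition carries :: "nat \<Rightarrow> nat set set \<Rightarrow> nat \<Rightarrow> nat set \<Rightarrow> bool" where
  "carries n E i D \<longleftrightarrow>
     (\<forall>d\<in>D. \<forall>j\<in>{1..n} - (D \<union> {i}). \<forall>vs es. simple_walk E d j vs es \<longrightarrow> i \<in> set vs)"

end

theory Submission
  imports Defs
begin

text \<open>
  Relative to another centre k, a partial conjugation x_{i,D} may be replaced by x_{i,D'}, where D'
  is whichever of D and its complement avoids k: this only changes it by an inner automorphism.
  For i \<noteq> k, x_{i,D} and x_{k,F} then commute in Out(W_n) exactly when these normalised sides are
  disjoint. Disjoint sides give literally commuting substitutions; a common letter d instead gives
  the words a_k a_i a_d a_i a_k and a_i a_k a_d a_k a_i, which are not conjugate by any element that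
  also centralises a_i and a_k. A hypertree carrying both excludes a common d, because the walk from d
  to k passes through i and its segment up to i must already pass through k. Conversely, a pairwise
  compatible family is carried by a hypertree obtained by cutting the vertex set at the centre i of a
  member x_{i,D} into insert i D and the complement of D, treating the two parts recursively (each
  member restricts to both parts by compatibility) and gluing the results at i.
\<close>

section \<open>Free reduction of words\<close>

definition cancel_cons :: "nat \<Rightarrow> nat list \<Rightarrow> nat list" where
  "cancel_cons x w = (case w of [] \<Rightarrow> [x] | y # ys \<Rightarrow> (if x = y then ys else x # y # ys))"

lemma reduce_Cons: "reduce (x # xs) = cancel_cons x (reduce xs)"
  by (simp add: cancel_cons_def)

declare reduce.simps(2)[simp del]

lemma distinct_adj_cancel_cons: "distinct_adj w \<Longrightarrow> distinct_adj (cancel_cons x w)"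
  by (cases w) (auto simp: cancel_cons_def distinct_adj_Cons)

lemma distinct_adj_reduce [simp]: "distinct_adj (reduce w)"
  by (induction w) (auto simp: reduce_Cons distinct_adj_cancel_cons)

lemma reduce_distinct_adj: "distinct_adj w \<Longrightarrow> reduce w = w"
proof (induction w)
  case (Cons x xs)
  then show ?case by (cases xs) (auto simp: reduce_Cons cancel_cons_def distinct_adj_Cons)
qed simp

lemma reduce_reduce [simp]: "reduce (reduce w) = reduce w"
  by (simp add: reduce_distinct_adj)

lemma reduce_single [simp]: "reduce [x] = [x]"
  by (simp add: reduce_distinct_adj)

lemma set_reduce_subset: "set (reduce w) \<subseteq> set w"
proof (induction w)
  case (Cons x w)
  have "set (cancel_cons x l) \<subseteq> insert x (set l)" for l
    by (cases l) (auto simp: cancel_cons_def)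
  then show ?case using Cons by (fastforce simp: reduce_Cons)
qed simp

lemma cancel_cons_cancel_cons: "distinct_adj w \<Longrightarrow> cancel_cons x (cancel_cons x w) = w"
  by (cases w rule: remdups_adj.cases) (auto simp: cancel_cons_def)

lemma reduce_append_reduce_right [simp]: "reduce (a @ reduce b) = reduce (a @ b)"
  by (induction a) (auto simp: reduce_Cons)

lemma reduce_cancel_cons_append:
  assumes "distinct_adj w"
  shows "reduce (cancel_cons x w @ b) = cancel_cons x (reduce (w @ b))"
proof (cases w)
  case (Cons y ys)
  have "distinct_adj (reduce (ys @ b))" by simp
  then show ?thesis
    using Cons cancel_cons_cancel_cons by (auto simp: reduce_Cons cancel_cons_def)
qed (simp add: reduce_Cons cancel_cons_def)

lemma reduce_append_reduce_left [simp]: "reduce (reduce a @ b) = reduce (a @ b)"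
  by (induction a) (simp_all add: reduce_Cons reduce_cancel_cons_append)

lemma reduce_append_reduce_mid [simp]: "reduce (a @ reduce b @ c) = reduce (a @ b @ c)"
  by (metis reduce_append_reduce_left reduce_append_reduce_right)

lemma reduce_cancel_pair: "reduce (a @ x # x # b) = reduce (a @ b)"
  by (induction a) (simp_all add: reduce_Cons cancel_cons_cancel_cons)

lemma reduce_cancel_pair_Cons [simp]: "reduce (x # x # b) = reduce b"
  using reduce_cancel_pair[of "[]"] by simp

lemma reduce_cancel_inverse: "reduce (a @ y @ rev y @ b) = reduce (a @ b)"
proof (induction y arbitrary: a b)
  case (Cons z y)
  have "reduce (a @ (z # y) @ rev (z # y) @ b) = reduce ((a @ [z]) @ y @ rev y @ z # b)"
    by simp
  also have "\<dots> = reduce (a @ b)"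
    unfolding Cons using reduce_cancel_pair[of a z b] by simp
  finally show ?case .
qed simp

lemmas reduce_cancel_inverse_rev = reduce_cancel_inverse[of _ "rev y" for y, simplified]

lemma reduce_cancel_simps [simp]:
  "reduce (a @ y @ rev y @ c) = reduce (a @ c)"
  "reduce (a @ rev y @ y @ c) = reduce (a @ c)"
  "reduce (y @ rev y @ c) = reduce c"
  "reduce (rev y @ y @ c) = reduce c"
  "reduce (a @ y @ rev y) = reduce a"
  "reduce (a @ rev y @ y) = reduce a"
  using reduce_cancel_inverse[of a y c] reduce_cancel_inverse_rev[of a y c]
    reduce_cancel_inverse[of "[]" y c] reduce_cancel_inverse_rev[of "[]" y c]
    reduce_cancel_inverse[of a y "[]"] reduce_cancel_inverse_rev[of a y "[]"]
  by simp_all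

lemma reduce_rev_snoc:
  assumes "distinct_adj w"
  shows "reduce (rev w @ [x]) = rev (cancel_cons x w)"
proof (cases w)
  case (Cons y ys)
  show ?thesis
  proof (cases "x = y")
    case True
    then have "reduce (rev w @ [x]) = reduce (rev ys)"
      using Cons reduce_cancel_pair[of "rev ys" y "[]"] by simp
    moreover have "distinct_adj (rev ys)" using assms Cons by (auto simp: distinct_adj_Cons)
    ultimately show ?thesis
      using True Cons by (simp add: cancel_cons_def reduce_distinct_adj)
  next
    case False
    then have "distinct_adj (x # w)" using assms Cons by simp
    then have "distinct_adj (rev (x # w))" by (simp only: distinct_adj_rev)
    then show ?thesis using False Cons by (simp add: cancel_cons_def reduce_distinct_adj)
  qed
qed (simp add: cancel_cons_def)

lemma rev_reduce [simp]: "rev (reduce w) = reduce (rev w)"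
proof (induction w)
  case (Cons x w)
  have "reduce (rev (x # w)) = reduce (reduce (rev w) @ [x])" by simp
  also have "\<dots> = rev (cancel_cons x (reduce w))"
    by (simp flip: Cons add: reduce_rev_snoc)
  finally show ?case by (simp add: reduce_Cons)
qed simp

lemma reduced_word_iff: "reduced_word n w \<longleftrightarrow> set w \<subseteq> {1..n} \<and> distinct_adj w"
  by (simp add: reduced_word_def distinct_adj_conv_nth)

section \<open>Partial conjugations acting on words\<close>

definition pconj_word :: "nat \<Rightarrow> nat set \<Rightarrow> nat list \<Rightarrow> nat list" where
  "pconj_word i D u = concat (map (\<lambda>j. if j \<in> D then [i, j, i] else [j]) u)"

lemma pconj_eq_reduce_pconj_word: "pconj i D u = reduce (pconj_word i D u)"
  by (simp add: pconj_def pconj_word_def)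

lemma pconj_word_Nil [simp]: "pconj_word i D [] = []"
  and pconj_word_Cons [simp]: "pconj_word i D (x # u) = (if x \<in> D then [i, x, i] else [x]) @ pconj_word i D u"
  and pconj_word_append [simp]: "pconj_word i D (a @ b) = pconj_word i D a @ pconj_word i D b"
  by (simp_all add: pconj_word_def)

lemma pconj_word_rev [simp]: "pconj_word i D (rev u) = rev (pconj_word i D u)"
  by (induction u) auto

lemma set_pconj_word_subset: "set (pconj_word i D u) \<subseteq> insert i (set u)"
  by (induction u) auto

lemma reduce_pconj_word_cancel_cons:
  assumes "distinct_adj w"
  shows "reduce (pconj_word i D (cancel_cons x w)) = reduce (pconj_word i D (x # w))"
proof (cases w)
  case (Cons y ys)
  show ?thesis
  proof (cases "x = y")
    case True
    then show ?thesis using Cons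
      by (cases "x \<in> D")
        (simp_all add: cancel_cons_def reduce_cancel_pair[of "[i, y]", simplified]
          reduce_cancel_pair[of "[i]", simplified])
  qed (use Cons in \<open>simp add: cancel_cons_def\<close>)
qed (simp add: cancel_cons_def)

lemma reduce_pconj_word_reduce [simp]:
  "reduce (pconj_word i D (reduce u)) = reduce (pconj_word i D u)"
proof (induction u)
  case (Cons x u)
  have "reduce (pconj_word i D (reduce (x # u))) = reduce (pconj_word i D [x] @ pconj_word i D (reduce u))"
    by (simp add: reduce_Cons reduce_pconj_word_cancel_cons)
  also have "\<dots> = reduce (pconj_word i D [x] @ reduce (pconj_word i D (reduce u)))" by simp
  finally show ?case using Cons by simp
qed simp

lemma reduce_pconj_word_reduce_mid [simp]:
  "reduce (a @ pconj_word i D (reduce u) @ b) = reduce (a @ pconj_word i D u @ b)"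
  by (metis reduce_append_reduce_mid reduce_pconj_word_reduce)

lemma pconj_word_commute:
  assumes "\<And>j. pconj_word i D (pconj_word k F [j]) = pconj_word k F (pconj_word i D [j])"
  shows "pconj_word i D (pconj_word k F u) = pconj_word k F (pconj_word i D u)"
proof (induction u)
  case (Cons x u)
  have "pconj_word i D (pconj_word k F ([x] @ u)) = pconj_word k F (pconj_word i D ([x] @ u))"
    by (simp only: pconj_word_append assms Cons.IH)
  then show ?case by simp
qed simp

section \<open>The commutation criterion for partial conjugations\<close>

lemma reduce_conj_append: "reduce (i # a @ b @ [i]) = reduce ((i # a @ [i]) @ (i # b @ [i]))"
  using reduce_cancel_pair[of "i # a" i "b @ [i]"] by simp

lemma reduce_pconj_word_complement:
  assumes "set u \<subseteq> V" "D \<subseteq> V - {i}"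
  shows "reduce (pconj_word i (V - {i} - D) u) = reduce (i # pconj_word i D u @ [i])"
  using assms(1)
proof (induction u)
  case (Cons x u)
  have letter: "reduce (i # pconj_word i D [x] @ [i]) = pconj_word i (V - {i} - D) [x]"
    using Cons.prems assms(2) reduce_cancel_pair[of "[x]" i "[]"] by (auto simp: reduce_distinct_adj)
  have split: "pconj_word i E (x # u) = pconj_word i E [x] @ pconj_word i E u" for E
    by simp
  have "reduce (i # pconj_word i D (x # u) @ [i])
      = reduce (reduce (i # pconj_word i D [x] @ [i]) @ reduce (i # pconj_word i D u @ [i]))"
    using reduce_conj_append[of i "pconj_word i D [x]" "pconj_word i D u"] by (simp add: split)
  also have "\<dots> = reduce (pconj_word i (V - {i} - D) (x # u))"
    by (simp only: letter Cons.IH[OF conjunct2[OF Cons.prems[simplified]], symmetric]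
        reduce_append_reduce_right split)
  finally show ?case ..
qed simp

text \<open>Up to conjugation by the letter i, the partial conjugations with centre i and sides D and
  V - {i} - D coincide; pc_side V i D k is the one of the two sides that avoids k.\<close>

definition pc_side :: "nat set \<Rightarrow> nat \<Rightarrow> nat set \<Rightarrow> nat \<Rightarrow> nat set" where
  "pc_side V i D k = (if k \<in> D then V - {i} - D else D)"

definition pc_compatible :: "nat set \<Rightarrow> nat \<Rightarrow> nat set \<Rightarrow> nat \<Rightarrow> nat set \<Rightarrow> bool" where
  "pc_compatible V i D k F \<longleftrightarrow> i = k \<or> pc_side V i D k \<inter> pc_side V k F i = {}"

lemma pc_side_subset: "D \<subseteq> V - {i} \<Longrightarrow> pc_side V i D k \<subseteq> V - {i}"
  by (auto simp: pc_side_def)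

lemma not_in_pc_side: "k \<notin> pc_side V i D k"
  by (auto simp: pc_side_def)

lemma pconj_eq_conj_pc_side:
  assumes "D \<subseteq> V - {i}" "set u \<subseteq> V" "c = (if k \<in> D then [i] else [])"
  shows "pconj i D u = reduce (c @ pconj_word i (pc_side V i D k) u @ rev c)"
proof (cases "k \<in> D")
  case True
  have "D = V - {i} - (V - {i} - D)" using assms(1) by auto
  then have "pconj i D u = reduce (i # pconj_word i (V - {i} - D) u @ [i])"
    using reduce_pconj_word_complement[OF assms(2), of "V - {i} - D" i]
    by (simp add: pconj_eq_reduce_pconj_word)
  then show ?thesis using True assms(3) by (simp add: pc_side_def)
qed (use assms(3) in \<open>simp add: pc_side_def pconj_eq_reduce_pconj_word\<close>)

lemma set_pconj_subset: "set (pconj i D u) \<subseteq> insert i (set u)"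
  using set_reduce_subset set_pconj_word_subset
  unfolding pconj_eq_reduce_pconj_word by (metis subset_trans)

lemma pconj_pconj_eq_conj_pc_side:
  assumes "i \<in> V" "k \<in> V" "D \<subseteq> V - {i}" "F \<subseteq> V - {k}"
  obtains g where "set g \<subseteq> V"
    "\<And>u. set u \<subseteq> V \<Longrightarrow> pconj i D (pconj k F u)
       = reduce (g @ pconj_word i (pc_side V i D k) (pconj_word k (pc_side V k F i) u) @ rev g)"
proof
  define a where "a = (if k \<in> D then [i] else [])"
  define b where "b = (if i \<in> F then [k] else [])"
  let ?Di = "pc_side V i D k" and ?Fk = "pc_side V k F i"
  show "set (a @ pconj_word i ?Di b) \<subseteq> V"
    using set_pconj_word_subset[of i ?Di b] assms(1,2) by (auto simp: a_def b_def)
  fix u assume u: "set u \<subseteq> V"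
  have "set (pconj k F u) \<subseteq> V" using set_pconj_subset[of k F u] u assms(2) by auto
  then have "pconj i D (pconj k F u) = reduce (a @ pconj_word i ?Di (pconj k F u) @ rev a)"
    using pconj_eq_conj_pc_side[OF assms(3) _ a_def] by blast
  also have "\<dots> = reduce (a @ pconj_word i ?Di (reduce (b @ pconj_word k ?Fk u @ rev b)) @ rev a)"
    using pconj_eq_conj_pc_side[OF assms(4) u b_def] by simp
  also have "\<dots> = reduce ((a @ pconj_word i ?Di b) @ pconj_word i ?Di (pconj_word k ?Fk u)
                        @ rev (a @ pconj_word i ?Di b))"
    by simp
  finally show "pconj i D (pconj k F u) = \<dots>" .
qed

lemma pconj_word_commute_same_centre:
  "i \<notin> D \<Longrightarrow> i \<notin> F \<Longrightarrow> pconj_word i D (pconj_word i F u) = pconj_word i F (pconj_word i D u)"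
  by (rule pconj_word_commute) auto

lemma pconj_word_commute_disjoint:
  "i \<noteq> k \<Longrightarrow> i \<notin> F \<Longrightarrow> k \<notin> D \<Longrightarrow> D \<inter> F = {} \<Longrightarrow>
    pconj_word i D (pconj_word k F u) = pconj_word k F (pconj_word i D u)"
  by (rule pconj_word_commute) auto

lemma pc_compatible_imp_commute_out:
  assumes "i \<in> {1..n}" "k \<in> {1..n}" "D \<subseteq> {1..n} - {i}" "F \<subseteq> {1..n} - {k}"
    and "pc_compatible {1..n} i D k F"
  shows "commute_out n i D k F"
proof (cases "i = k")
  case True
  then have "i \<notin> D" "i \<notin> F" using assms by auto
  then show ?thesis unfolding commute_out_def
    by (intro exI[of _ "[]"])
      (simp add: reduced_word_iff pconj_eq_reduce_pconj_word wmul_def True pconj_word_commute_same_centre)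
next
  case False
  let ?V = "{1..n::nat}"
  let ?Di = "pc_side ?V i D k" and ?Fk = "pc_side ?V k F i"
  have "?Di \<inter> ?Fk = {}" using assms(5) False by (simp add: pc_compatible_def)
  then have comm: "pconj_word i ?Di (pconj_word k ?Fk u) = pconj_word k ?Fk (pconj_word i ?Di u)" for u
    by (rule pconj_word_commute_disjoint[OF False not_in_pc_side not_in_pc_side])
  obtain g where g: "set g \<subseteq> ?V" "\<And>u. set u \<subseteq> ?V \<Longrightarrow>
      pconj i D (pconj k F u) = reduce (g @ pconj_word i ?Di (pconj_word k ?Fk u) @ rev g)"
    using pconj_pconj_eq_conj_pc_side[OF assms(1-4)] by blast
  obtain h where h: "set h \<subseteq> ?V" "\<And>u. set u \<subseteq> ?V \<Longrightarrow>
      pconj k F (pconj i D u) = reduce (h @ pconj_word k ?Fk (pconj_word i ?Di u) @ rev h)"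
    using pconj_pconj_eq_conj_pc_side[OF assms(2,1,4,3)] by blast
  show ?thesis unfolding commute_out_def
  proof (intro exI[of _ "reduce (g @ rev h)"] conjI allI impI)
    show "reduced_word n (reduce (g @ rev h))"
      using set_reduce_subset[of "g @ rev h"] g(1) h(1) by (auto simp: reduced_word_iff)
    fix u assume "reduced_word n u"
    then have u: "set u \<subseteq> ?V" by (simp add: reduced_word_iff)
    show "pconj i D (pconj k F u)
        = wmul (reduce (g @ rev h)) (wmul (pconj k F (pconj i D u)) (rev (reduce (g @ rev h))))"
      unfolding g(2)[OF u] h(2)[OF u] wmul_def comm
      using reduce_cancel_inverse_rev[of "g @ pconj_word k ?Fk (pconj_word i ?Di u)" h "rev g"]
      by simp
  qed
qed

lemma conj_letter_eq_letter:
  assumes "distinct_adj c" "reduce (c @ [x] @ rev c) = [x]"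
  shows "c = [] \<or> c = [x]"
proof -
  have conj_reduced: "reduce (c @ [x] @ rev c) = c @ [x] @ rev c"
    if "distinct_adj c" "c \<noteq> []" "last c \<noteq> x" for c
    using that by (intro reduce_distinct_adj) (auto simp: distinct_adj_append_iff hd_rev distinct_adj_Cons)
  show ?thesis
  proof (cases c rule: rev_exhaust)
    case (snoc c' y)
    show ?thesis
    proof (cases "y = x")
      case True
      have "reduce (c @ [x] @ rev c) = reduce (c' @ [x] @ rev c')"
        using snoc True reduce_cancel_pair[of c' x "[x] @ rev c'"] by simp
      moreover have "distinct_adj c'" "c' = [] \<or> last c' \<noteq> x"
        using assms(1) snoc True by (auto simp: distinct_adj_append_iff)
      ultimately show ?thesis
        using assms(2) snoc True conj_reduced[of c'] by (cases c') auto
    next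
      case False
      then have "reduce (c @ [x] @ rev c) = c @ [x] @ rev c"
        using assms(1) snoc by (intro conj_reduced) auto
      then show ?thesis using assms(2) snoc by simp
    qed
  qed simp
qed

lemma commute_out_imp_conj_pc_side:
  assumes "i \<in> {1..n}" "k \<in> {1..n}" "D \<subseteq> {1..n} - {i}" "F \<subseteq> {1..n} - {k}"
    and "commute_out n i D k F"
  obtains c where "distinct_adj c"
    "\<And>u. reduced_word n u \<Longrightarrow>
       reduce (pconj_word i (pc_side {1..n} i D k) (pconj_word k (pc_side {1..n} k F i) u))
     = reduce (c @ pconj_word k (pc_side {1..n} k F i) (pconj_word i (pc_side {1..n} i D k) u) @ rev c)"
proof -
  let ?V = "{1..n::nat}"
  let ?Di = "pc_side ?V i D k" and ?Fk = "pc_side ?V k F i"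
  obtain g where g: "\<And>u. set u \<subseteq> ?V \<Longrightarrow>
      pconj i D (pconj k F u) = reduce (g @ pconj_word i ?Di (pconj_word k ?Fk u) @ rev g)"
    using pconj_pconj_eq_conj_pc_side[OF assms(1-4)] by blast
  obtain h where h: "\<And>u. set u \<subseteq> ?V \<Longrightarrow>
      pconj k F (pconj i D u) = reduce (h @ pconj_word k ?Fk (pconj_word i ?Di u) @ rev h)"
    using pconj_pconj_eq_conj_pc_side[OF assms(2,1,4,3)] by blast
  obtain w where w: "\<And>u. reduced_word n u \<Longrightarrow>
      pconj i D (pconj k F u) = wmul w (wmul (pconj k F (pconj i D u)) (rev w))"
    using assms(5) unfolding commute_out_def by blast
  have "reduce (pconj_word i ?Di (pconj_word k ?Fk u))
      = reduce (reduce (rev g @ w @ h) @ pconj_word k ?Fk (pconj_word i ?Di u) @ rev (reduce (rev g @ w @ h)))"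
    if "reduced_word n u" for u
  proof -
    have u: "set u \<subseteq> ?V" using that by (simp add: reduced_word_iff)
    let ?X = "pconj_word i ?Di (pconj_word k ?Fk u)" and ?Y = "pconj_word k ?Fk (pconj_word i ?Di u)"
    have "reduce (g @ ?X @ rev g) = reduce (w @ h @ ?Y @ rev h @ rev w)"
      using w[OF that] g[OF u] h[OF u] by (simp add: wmul_def)
    then have "reduce (rev g @ reduce (g @ ?X @ rev g) @ g)
        = reduce (rev g @ reduce (w @ h @ ?Y @ rev h @ rev w) @ g)"
      by simp
    then show ?thesis
      using reduce_append_reduce_right[of "rev g @ w @ h @ ?Y" "rev h @ rev w @ g"] by simp
  qed
  then show ?thesis using that[of "reduce (rev g @ w @ h)"] by simp
qed

lemma commute_out_imp_pc_compatible:
  assumes "i \<in> {1..n}" "k \<in> {1..n}" "D \<subseteq> {1..n} - {i}" "F \<subseteq> {1..n} - {k}"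
    and "commute_out n i D k F"
  shows "pc_compatible {1..n} i D k F"
proof (rule ccontr)
  let ?V = "{1..n::nat}"
  let ?Di = "pc_side ?V i D k" and ?Fk = "pc_side ?V k F i"
  assume "\<not> pc_compatible ?V i D k F"
  then obtain d where ik: "i \<noteq> k" and d: "d \<in> ?Di" "d \<in> ?Fk"
    by (auto simp: pc_compatible_def)
  have sides: "k \<notin> ?Di" "i \<notin> ?Fk" "i \<notin> ?Di" "k \<notin> ?Fk" "?Di \<subseteq> ?V" "?Fk \<subseteq> ?V"
    using not_in_pc_side pc_side_subset[OF assms(3), of k] pc_side_subset[OF assms(4), of i]
    by blast+
  obtain c where c: "distinct_adj c" "\<And>u. reduced_word n u \<Longrightarrow>
      reduce (pconj_word i ?Di (pconj_word k ?Fk u)) = reduce (c @ pconj_word k ?Fk (pconj_word i ?Di u) @ rev c)"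
    using commute_out_imp_conj_pc_side[OF assms] by blast
  have "reduce (c @ [x] @ rev c) = [x]" if "x \<in> {i, k}" for x
  proof -
    have "reduced_word n [x]" "pconj_word i ?Di (pconj_word k ?Fk [x]) = [x]"
      "pconj_word k ?Fk (pconj_word i ?Di [x]) = [x]"
      using that assms(1,2) sides by (auto simp: reduced_word_iff)
    then show ?thesis using c(2) by (metis reduce_single)
  qed
  then have "c = []"
    using conj_letter_eq_letter[OF c(1)] ik by blast
  then have "reduce [k, i, d, i, k] = reduce [i, k, d, k, i]"
    using c(2)[of "[d]"] d sides by (auto simp: reduced_word_iff)
  moreover have "d \<noteq> i" "d \<noteq> k" using d sides by auto
  ultimately show False using ik by (simp add: reduce_distinct_adj)
qed

lemma commute_out_iff_pc_compatible:
  assumes "is_partial_conj n i D" "is_partial_conj n k F"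
  shows "commute_out n i D k F \<longleftrightarrow> pc_compatible {1..n} i D k F"
proof -
  have pc: "i \<in> {1..n}" "k \<in> {1..n}" "D \<subseteq> {1..n} - {i}" "F \<subseteq> {1..n} - {k}"
    using assms unfolding is_partial_conj_def by auto
  show ?thesis
    using commute_out_imp_pc_compatible[OF pc] pc_compatible_imp_commute_out[OF pc] by blast
qed

section \<open>Simple walks\<close>

lemma simple_walk_nthD:
  assumes "simple_walk E v v' vs es"
  shows "length vs = Suc (length es)" "vs ! 0 = v" "vs ! length es = v'" "distinct vs" "distinct es"
    "\<And>t. t < length es \<Longrightarrow> es ! t \<in> E \<and> vs ! t \<in> es ! t \<and> vs ! Suc t \<in> es ! t"
proof -
  have "vs \<noteq> []" using assms unfolding simple_walk_def by auto
  then show "length vs = Suc (length es)" "vs ! 0 = v" "vs ! length es = v'" "distinct vs" "distinct es"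
    "\<And>t. t < length es \<Longrightarrow> es ! t \<in> E \<and> vs ! t \<in> es ! t \<and> vs ! Suc t \<in> es ! t"
    using assms unfolding simple_walk_def by (auto simp: hd_conv_nth last_conv_nth)
qed

lemma simple_walk_nthI:
  assumes "length vs = Suc (length es)" "vs ! 0 = v" "vs ! length es = v'" "distinct vs" "distinct es"
    "\<And>t. t < length es \<Longrightarrow> es ! t \<in> E \<and> vs ! t \<in> es ! t \<and> vs ! Suc t \<in> es ! t"
  shows "simple_walk E v v' vs es"
proof -
  have "vs \<noteq> []" using assms(1) by auto
  then show ?thesis using assms unfolding simple_walk_def
    by (auto simp: hd_conv_nth last_conv_nth)
qed

lemma simple_walk_rev:
  assumes "simple_walk E v v' vs es"
  shows "simple_walk E v' v (rev vs) (rev es)"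
proof -
  note b = simple_walk_nthD[OF assms]
  let ?L = "length es"
  show ?thesis
  proof (rule simple_walk_nthI)
    show "length (rev vs) = Suc (length (rev es))" using b by simp
    show "rev vs ! 0 = v'" using b by (simp add: rev_nth)
    show "rev vs ! length (rev es) = v" using b by (simp add: rev_nth)
    show "distinct (rev vs)" "distinct (rev es)" using b by simp_all
  next
    fix t assume t: "t < length (rev es)"
    define s where "s = ?L - Suc t"
    have s: "s < ?L" "Suc s = ?L - t" using t by (auto simp: s_def)
    have "rev es ! t = es ! s" using t by (simp add: rev_nth s_def)
    moreover have "rev vs ! t = vs ! Suc s" using t b(1) s by (simp add: rev_nth)
    moreover have "rev vs ! Suc t = vs ! s" using t b(1) by (simp add: rev_nth s_def)
    ultimately show "rev es ! t \<in> E \<and> rev vs ! t \<in> rev es ! t \<and> rev vs ! Suc t \<in> rev es ! t"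
      using b(6)[OF s(1)] by simp
  qed
qed

lemma simple_walk_mono: "simple_walk E v v' vs es \<Longrightarrow> E \<subseteq> E' \<Longrightarrow> simple_walk E' v v' vs es"
  unfolding simple_walk_def by auto

lemma simple_walk_split:
  assumes "simple_walk E v v' vs es" "s \<le> length es" "vs ! s = x"
  shows "simple_walk E v x (take (Suc s) vs) (take s es)"
    "simple_walk E x v' (drop s vs) (drop s es)"
proof -
  note b = simple_walk_nthD[OF assms(1)]
  show "simple_walk E v x (take (Suc s) vs) (take s es)"
    by (rule simple_walk_nthI) (use b assms(2,3) in auto)
  show "simple_walk E x v' (drop s vs) (drop s es)"
  proof (rule simple_walk_nthI)
    show "length (drop s vs) = Suc (length (drop s es))" using b assms(2) by simp
    show "drop s vs ! 0 = x" using b assms by simp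
    show "drop s vs ! length (drop s es) = v'" using b assms by simp
    show "distinct (drop s vs)" "distinct (drop s es)" using b by simp_all
  next
    fix t assume "t < length (drop s es)"
    then show "drop s es ! t \<in> E \<and> drop s vs ! t \<in> drop s es ! t \<and> drop s vs ! Suc t \<in> drop s es ! t"
      using b(6)[of "s + t"] b(1) assms(2) by auto
  qed
qed

lemma simple_walk_vertices_subset:
  assumes "simple_walk E v v' vs es" "\<forall>e\<in>E. e \<subseteq> V" "v \<in> V"
  shows "set vs \<subseteq> V"
proof
  fix x assume "x \<in> set vs"
  then obtain t where t: "t < length vs" "vs ! t = x" by (auto simp: in_set_conv_nth)
  note b = simple_walk_nthD[OF assms(1)]
  show "x \<in> V"
  proof (cases t)
    case 0 then show ?thesis using t b assms by simp
  next
    case (Suc t') then show ?thesis using t b(1) b(6)[of t'] assms(2) by auto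
  qed
qed

lemma simple_walk_edges_subset: "simple_walk E v v' vs es \<Longrightarrow> set es \<subseteq> E"
  using simple_walk_nthD(6) by (fastforce simp: in_set_conv_nth)

lemma simple_walk_append:
  assumes w1: "simple_walk E1 v x vs1 es1" and w2: "simple_walk E2 x v' vs2 es2"
    and dv: "set vs1 \<inter> set (tl vs2) = {}" and de: "set es1 \<inter> set es2 = {}"
  shows "simple_walk (E1 \<union> E2) v v' (vs1 @ tl vs2) (es1 @ es2)"
proof -
  note b1 = simple_walk_nthD[OF w1] and b2 = simple_walk_nthD[OF w2]
  let ?L1 = "length es1" and ?L2 = "length es2"
  have ix: "(vs1 @ tl vs2) ! (?L1 + r) = vs2 ! r" if "r \<le> ?L2" for r
  proof (cases r)
    case 0 then show ?thesis using b1 b2 by (simp add: nth_append)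
  next
    case (Suc r') then show ?thesis using b1 b2 that by (simp add: nth_append nth_tl)
  qed
  show ?thesis
  proof (rule simple_walk_nthI)
    show "length (vs1 @ tl vs2) = Suc (length (es1 @ es2))" using b1 b2 by simp
    show "(vs1 @ tl vs2) ! 0 = v" using b1 by (simp add: nth_append)
    show "(vs1 @ tl vs2) ! length (es1 @ es2) = v'" using ix[of ?L2] b2 by simp
    show "distinct (vs1 @ tl vs2)" using b1 b2 dv by (simp add: distinct_tl)
    show "distinct (es1 @ es2)" using b1 b2 de by simp
  next
    fix t assume t: "t < length (es1 @ es2)"
    show "(es1 @ es2) ! t \<in> E1 \<union> E2 \<and> (vs1 @ tl vs2) ! t \<in> (es1 @ es2) ! t \<and> (vs1 @ tl vs2) ! Suc t \<in> (es1 @ es2) ! t"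
    proof (cases "t < ?L1")
      case True
      then show ?thesis using b1(6)[OF True] b1(1) by (simp add: nth_append)
    next
      case False
      define r where "r = t - ?L1"
      have r: "t = ?L1 + r" "r < ?L2" using False t by (auto simp: r_def)
      have "(vs1 @ tl vs2) ! t = vs2 ! r" "(vs1 @ tl vs2) ! Suc t = vs2 ! Suc r"
        using ix[of r] ix[of "Suc r"] r by auto
      moreover have "(es1 @ es2) ! t = es2 ! r" using r by (simp add: nth_append)
      ultimately show ?thesis using b2(6)[OF r(2)] by simp
    qed
  qed
qed

section \<open>Gluing hypertrees at a cut vertex\<close>

definition hypertree_on :: "nat set \<Rightarrow> nat set set \<Rightarrow> bool" where
  "hypertree_on V E \<longleftrightarrow> (\<forall>e\<in>E. e \<subseteq> V \<and> card e \<ge> 2) \<and>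
     (\<forall>v\<in>V. \<forall>v'\<in>V. \<exists>!p. simple_walk E v v' (fst p) (snd p))"

lemma hypertree_eq_hypertree_on: "hypertree n E = hypertree_on {1..n} E"
  by (simp add: hypertree_def hypertree_on_def hypergraph_def)

lemma hypertree_on_ex_walk: "hypertree_on V E \<Longrightarrow> v \<in> V \<Longrightarrow> v' \<in> V \<Longrightarrow> \<exists>vs es. simple_walk E v v' vs es"
  unfolding hypertree_on_def by (meson ex1_implies_ex)

lemma hypertree_on_walk_unique:
  assumes "hypertree_on V E" "v \<in> V" "v' \<in> V" "simple_walk E v v' vs es" "simple_walk E v v' vs' es'"
  shows "vs = vs' \<and> es = es'"
proof -
  have "\<exists>!p. simple_walk E v v' (fst p) (snd p)" using assms(1-3) unfolding hypertree_on_def by blast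
  then have "(vs, es) = (vs', es')" using assms(4,5) by (metis fst_conv snd_conv)
  then show ?thesis by simp
qed

lemma ex1_simple_walkI:
  assumes "\<exists>vs es. simple_walk E v v' vs es"
    "\<And>vs es vs' es'. simple_walk E v v' vs es \<Longrightarrow> simple_walk E v v' vs' es' \<Longrightarrow> vs = vs' \<and> es = es'"
  shows "\<exists>!p. simple_walk E v v' (fst p) (snd p)"
proof -
  obtain vs es where w: "simple_walk E v v' vs es" using assms(1) by blast
  show ?thesis
  proof (rule ex1I[of _ "(vs, es)"])
    show "simple_walk E v v' (fst (vs, es)) (snd (vs, es))" using w by simp
    fix p assume "simple_walk E v v' (fst p) (snd p)"
    then show "p = (vs, es)" using assms(2)[OF _ w, of "fst p" "snd p"] by (cases p) auto
  qed
qed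

lemma hypertree_on_edges_subset: "hypertree_on V E \<Longrightarrow> \<forall>e\<in>E. e \<subseteq> V"
  unfolding hypertree_on_def by blast

locale cut_vertex_split =
  fixes A B :: "nat set" and E1 E2 :: "nat set set" and i :: nat
  assumes E1A: "\<forall>e\<in>E1. e \<subseteq> A" and E2B: "\<forall>e\<in>E2. e \<subseteq> B" and AB: "A \<inter> B \<subseteq> {i}"
begin

lemma walk_step_stays:
  assumes "simple_walk (E1 \<union> E2) v v' vs es" "t < length es" "vs ! t \<in> A" "vs ! t \<noteq> i"
  shows "vs ! Suc t \<in> A \<and> es ! t \<in> E1"
proof -
  note b = simple_walk_nthD[OF assms(1)]
  have "es ! t \<notin> E2"
  proof
    assume "es ! t \<in> E2"
    then have "vs ! t \<in> B" using b(6)[OF assms(2)] E2B by auto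
    then show False using assms(3,4) AB by auto
  qed
  then have "es ! t \<in> E1" using b(6)[OF assms(2)] by auto
  then show ?thesis using b(6)[OF assms(2)] E1A by auto
qed

lemma walk_stays_forward:
  assumes "simple_walk (E1 \<union> E2) v v' vs es" "vs ! p \<in> A" "p \<le> q" "q \<le> length es"
    "\<forall>r. p \<le> r \<and> r < q \<longrightarrow> vs ! r \<noteq> i"
  shows "vs ! q \<in> A"
  using assms(3-5)
proof (induction q)
  case 0 then show ?case using assms(2) by simp
next
  case (Suc q)
  show ?case
  proof (cases "p = Suc q")
    case True then show ?thesis using assms(2) by simp
  next
    case False
    then have "p \<le> q" using Suc by simp
    then have "vs ! q \<in> A" using Suc by simp
    moreover have "vs ! q \<noteq> i" using Suc \<open>p \<le> q\<close> by simp
    ultimately show ?thesis using walk_step_stays[OF assms(1)] Suc by simp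
  qed
qed

lemma walk_stays_backward:
  assumes "simple_walk (E1 \<union> E2) v v' vs es" "vs ! p \<in> A" "q \<le> p" "p \<le> length es"
    "\<forall>r. q < r \<and> r \<le> p \<longrightarrow> vs ! r \<noteq> i"
  shows "vs ! q \<in> A"
proof -
  note b = simple_walk_nthD[OF assms(1)]
  have rw: "simple_walk (E1 \<union> E2) v' v (rev vs) (rev es)" by (rule simple_walk_rev[OF assms(1)])
  let ?L = "length es"
  have ix: "rev vs ! (?L - r) = vs ! r" if "r \<le> ?L" for r
    using that b(1) by (simp add: rev_nth Suc_diff_le)
  have "rev vs ! (?L - q) \<in> A"
  proof (rule walk_stays_forward[OF rw, of "?L - p"])
    show "rev vs ! (?L - p) \<in> A" using ix assms(2,4) by simp
    show "?L - p \<le> ?L - q" using assms by simp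
    show "?L - q \<le> length (rev es)" by simp
    show "\<forall>r. ?L - p \<le> r \<and> r < ?L - q \<longrightarrow> rev vs ! r \<noteq> i"
    proof (intro allI impI)
      fix r assume r: "?L - p \<le> r \<and> r < ?L - q"
      have "?L - (?L - r) = r" using r by linarith
      then have "rev vs ! r = vs ! (?L - r)" using ix[of "?L - r"] by simp
      moreover have "q < ?L - r \<and> ?L - r \<le> p" using r assms(3,4) by auto
      ultimately show "rev vs ! r \<noteq> i" using assms(5) by simp
    qed
  qed
  then show ?thesis using ix assms(3,4) by simp
qed

lemma walk_meets_cut_vertex:
  assumes "simple_walk (E1 \<union> E2) v v' vs es" "v \<in> A" "v' \<notin> A"
  shows "\<exists>s \<le> length es. vs ! s = i"
proof (rule ccontr)
  assume "\<not> ?thesis"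
  then have "vs ! length es \<in> A"
    using walk_stays_forward[OF assms(1), of 0 "length es"] simple_walk_nthD[OF assms(1)] assms(2) by auto
  then show False using simple_walk_nthD(3)[OF assms(1)] assms(3) by simp
qed

text \<open>A simple walk that left A would have to pass through i both on leaving and on returning.\<close>

lemma walk_within_side:
  assumes "simple_walk (E1 \<union> E2) v v' vs es" "v \<in> A" "v' \<in> A"
  shows "simple_walk E1 v v' vs es"
proof -
  note b = simple_walk_nthD[OF assms(1)]
  let ?L = "length es"
  have allA: "vs ! q \<in> A" if q: "q \<le> ?L" for q
  proof (rule ccontr)
    assume nA: "vs ! q \<notin> A"
    have "\<exists>r. 0 \<le> r \<and> r < q \<and> vs ! r = i"
      using walk_stays_forward[OF assms(1), of 0 q] b(2) assms(2) q nA by auto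
    then obtain r where r: "r < q" "vs ! r = i" by auto
    have "\<exists>r'. q < r' \<and> r' \<le> ?L \<and> vs ! r' = i"
      using walk_stays_backward[OF assms(1), of ?L q] b(3) assms(3) q nA by auto
    then obtain r' where r': "q < r'" "r' \<le> ?L" "vs ! r' = i" by auto
    have "r = r'" using b(1,4) r r' q nth_eq_iff_index_eq[of vs r r'] by auto
    then show False using r r' by simp
  qed
  show ?thesis
  proof (rule simple_walk_nthI)
    show "length vs = Suc (length es)" "vs ! 0 = v" "vs ! length es = v'" "distinct vs" "distinct es"
      using b by auto
  next
    fix t assume t: "t < length es"
    have "es ! t \<notin> E2"
    proof
      assume "es ! t \<in> E2"
      then have "vs ! t \<in> B" "vs ! Suc t \<in> B" using b(6)[OF t] E2B by auto
      moreover have "vs ! t \<in> A" "vs ! Suc t \<in> A" using allA t by auto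
      ultimately have "vs ! t = vs ! Suc t" using AB by auto
      then show False using b(1,4) t nth_eq_iff_index_eq[of vs t "Suc t"] by auto
    qed
    then show "es ! t \<in> E1 \<and> vs ! t \<in> es ! t \<and> vs ! Suc t \<in> es ! t" using b(6)[OF t] by auto
  qed
qed

end

lemma cut_vertex_split_swap: "cut_vertex_split A B E1 E2 i \<Longrightarrow> cut_vertex_split B A E2 E1 i"
  unfolding cut_vertex_split_def by auto

lemma hypertree_on_cut_vertex_split:
  "hypertree_on A E1 \<Longrightarrow> hypertree_on B E2 \<Longrightarrow> A \<inter> B = {i} \<Longrightarrow> cut_vertex_split A B E1 E2 i"
  unfolding cut_vertex_split_def hypertree_on_def by auto

lemma (in cut_vertex_split) walk_across_split:
  assumes "simple_walk (E1 \<union> E2) v v' vs es" "v \<in> A" "v' \<in> B" "v' \<notin> A" "i \<in> A" "i \<in> B"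
  obtains s where "s \<le> length es" "vs ! s = i"
    "simple_walk E1 v i (take (Suc s) vs) (take s es)" "simple_walk E2 i v' (drop s vs) (drop s es)"
proof -
  obtain s where s: "s \<le> length es" "vs ! s = i" using walk_meets_cut_vertex[OF assms(1,2,4)] by blast
  have "simple_walk (E2 \<union> E1) i v' (drop s vs) (drop s es)"
    using simple_walk_split(2)[OF assms(1) s] by (simp add: Un_commute)
  from cut_vertex_split.walk_within_side[OF cut_vertex_split_swap[OF cut_vertex_split_axioms] this assms(6,3)]
  show ?thesis
    by (rule that[OF s walk_within_side[OF simple_walk_split(1)[OF assms(1) s] assms(2,5)]])
qed

lemma hypertree_on_edges_disjoint:
  assumes "hypertree_on A E1" "hypertree_on B E2" "A \<inter> B \<subseteq> {i}"
  shows "E1 \<inter> E2 = {}"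
proof (rule ccontr)
  assume "E1 \<inter> E2 \<noteq> {}"
  then obtain e where "e \<in> E1" "e \<in> E2" by auto
  then have "e \<subseteq> A" "e \<subseteq> B" "card e \<ge> 2" using assms(1,2) unfolding hypertree_on_def by auto
  then have "e \<subseteq> {i}" "card e \<ge> 2" using assms(3) by blast+
  then show False using card_mono[of "{i}" e] by simp
qed

lemma hypertree_on_union_ex_walk_across:
  assumes ht1: "hypertree_on A E1" and ht2: "hypertree_on B E2" and AB: "A \<inter> B = {i}"
    and v: "v \<in> A" "v' \<in> B"
  shows "\<exists>vs es. simple_walk (E1 \<union> E2) v v' vs es"
proof -
  have iAB: "i \<in> A" "i \<in> B" using AB by auto
  obtain vs1 es1 where w1: "simple_walk E1 v i vs1 es1" using hypertree_on_ex_walk[OF ht1 v(1) iAB(1)] by blast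
  obtain vs2 es2 where w2: "simple_walk E2 i v' vs2 es2" using hypertree_on_ex_walk[OF ht2 iAB(2) v(2)] by blast
  have "set vs1 \<subseteq> A" using simple_walk_vertices_subset[OF w1 hypertree_on_edges_subset[OF ht1] v(1)] .
  moreover have "set vs2 \<subseteq> B" using simple_walk_vertices_subset[OF w2 hypertree_on_edges_subset[OF ht2] iAB(2)] .
  moreover obtain vs2' where "vs2 = i # vs2'" "i \<notin> set vs2'"
    using w2 by (cases vs2) (auto simp: simple_walk_def)
  ultimately have "set vs1 \<inter> set (tl vs2) = {}" using AB by auto
  moreover have "set es1 \<inter> set es2 = {}"
    using simple_walk_edges_subset[OF w1] simple_walk_edges_subset[OF w2]
      hypertree_on_edges_disjoint[OF ht1 ht2] AB by auto
  ultimately show ?thesis using simple_walk_append[OF w1 w2] by blast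
qed

lemma hypertree_on_union_ex1_walk_across:
  assumes ht1: "hypertree_on A E1" and ht2: "hypertree_on B E2" and AB: "A \<inter> B = {i}"
    and v: "v \<in> A" "v' \<in> B" "v' \<notin> A"
  shows "\<exists>!p. simple_walk (E1 \<union> E2) v v' (fst p) (snd p)"
proof (rule ex1_simple_walkI)
  show "\<exists>vs es. simple_walk (E1 \<union> E2) v v' vs es"
    using hypertree_on_union_ex_walk_across[OF ht1 ht2 AB v(1,2)] .
next
  note g = hypertree_on_cut_vertex_split[OF ht1 ht2 AB]
  have iAB: "i \<in> A" "i \<in> B" using AB by auto
  fix vs es vs' es'
  assume W: "simple_walk (E1 \<union> E2) v v' vs es" and W': "simple_walk (E1 \<union> E2) v v' vs' es'"
  obtain s where s: "s \<le> length es" "vs ! s = i"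
      "simple_walk E1 v i (take (Suc s) vs) (take s es)" "simple_walk E2 i v' (drop s vs) (drop s es)"
    using cut_vertex_split.walk_across_split[OF g W v iAB] by blast
  obtain s' where s': "s' \<le> length es'" "vs' ! s' = i"
      "simple_walk E1 v i (take (Suc s') vs') (take s' es')" "simple_walk E2 i v' (drop s' vs') (drop s' es')"
    using cut_vertex_split.walk_across_split[OF g W' v iAB] by blast
  have first: "take (Suc s) vs = take (Suc s') vs'" "take s es = take s' es'"
    using hypertree_on_walk_unique[OF ht1 v(1) iAB(1) s(3) s'(3)] by auto
  moreover have "length (take (Suc s) vs) = Suc s" "length (take (Suc s') vs') = Suc s'"
    using s s' simple_walk_nthD(1)[OF W] simple_walk_nthD(1)[OF W'] by auto
  ultimately have "s' = s" by simp
  then have "drop s vs = drop s vs'" "drop s es = drop s es'"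
    using hypertree_on_walk_unique[OF ht2 iAB(2) v(2) s(4) s'(4)] by auto
  moreover have "take s vs = take s vs'" using first(1) \<open>s' = s\<close>
    by (metis lessI less_imp_le_nat min.absorb1 take_take)
  ultimately show "vs = vs' \<and> es = es'" using first(2) \<open>s' = s\<close> by (metis append_take_drop_id)
qed

lemma hypertree_on_union_ex1_walk_same_side:
  assumes ht: "hypertree_on A E1" and g: "cut_vertex_split A B E1 E2 i" and v: "v \<in> A" "v' \<in> A"
  shows "\<exists>!p. simple_walk (E1 \<union> E2) v v' (fst p) (snd p)"
proof (rule ex1_simple_walkI)
  show "\<exists>vs es. simple_walk (E1 \<union> E2) v v' vs es"
    using hypertree_on_ex_walk[OF ht v] simple_walk_mono by blast
next
  fix vs es vs' es'
  assume "simple_walk (E1 \<union> E2) v v' vs es" "simple_walk (E1 \<union> E2) v v' vs' es'"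
  then show "vs = vs' \<and> es = es'"
    using cut_vertex_split.walk_within_side[OF g] hypertree_on_walk_unique[OF ht v] v by blast
qed

lemma hypertree_on_union:
  assumes ht1: "hypertree_on A E1" and ht2: "hypertree_on B E2" and AB: "A \<inter> B = {i}"
  shows "hypertree_on (A \<union> B) (E1 \<union> E2)"
proof -
  note g = hypertree_on_cut_vertex_split[OF ht1 ht2 AB]
  have g': "cut_vertex_split B A E2 E1 i" by (rule cut_vertex_split_swap[OF g])
  have BA: "B \<inter> A = {i}" using AB by auto
  have "\<exists>!p. simple_walk (E1 \<union> E2) v v' (fst p) (snd p)" if v: "v \<in> A \<union> B" "v' \<in> A \<union> B" for v v'
  proof -
    consider "v \<in> A" "v' \<in> A" | "v \<in> B" "v' \<in> B" | "v \<in> A" "v \<notin> B" "v' \<in> B" "v' \<notin> A"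
      | "v \<in> B" "v \<notin> A" "v' \<in> A" "v' \<notin> B" using v by blast
    then show ?thesis
    proof cases
      case 1 then show ?thesis using hypertree_on_union_ex1_walk_same_side[OF ht1 g] by blast
    next
      case 2 then show ?thesis using hypertree_on_union_ex1_walk_same_side[OF ht2 g'] by (simp add: Un_commute)
    next
      case 3 then show ?thesis using hypertree_on_union_ex1_walk_across[OF ht1 ht2 AB] by blast
    next
      case 4 then show ?thesis using hypertree_on_union_ex1_walk_across[OF ht2 ht1 BA] by (simp add: Un_commute)
    qed
  qed
  moreover have "\<forall>e\<in>E1 \<union> E2. e \<subseteq> A \<union> B \<and> card e \<ge> 2" using ht1 ht2 unfolding hypertree_on_def by blast
  ultimately show ?thesis unfolding hypertree_on_def by blast
qed

lemma simple_walk_single_edge: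
  assumes "simple_walk {V} v v' vs es"
  shows "vs = (if v = v' then [v] else [v, v']) \<and> es = (if v = v' then [] else [V])"
proof -
  note b = simple_walk_nthD[OF assms]
  have "set es \<subseteq> {V}" using simple_walk_edges_subset[OF assms] .
  then have "length es \<le> 1" using b(5) distinct_card[of es] card_mono[of "{V}" "set es"] by simp
  then consider "es = []" | "es = [V]"
    using \<open>set es \<subseteq> {V}\<close> by (cases es) auto
  then show ?thesis
  proof cases
    case 1
    then have "vs = [vs ! 0]" using b(1) by (cases vs) auto
    then show ?thesis using 1 b by auto
  next
    case 2
    then have "length vs = 2" using b(1) by simp
    then obtain a c where vs: "vs = [a, c]"
      by (metis One_nat_def length_0_conv length_Suc_conv numeral_2_eq_2)
    then show ?thesis using b(2-4) 2 by auto
  qed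
qed

lemma hypertree_on_single_edge:
  assumes "card V \<ge> 2"
  shows "hypertree_on V {V}"
proof -
  have "\<exists>!p. simple_walk {V} v v' (fst p) (snd p)" if v: "v \<in> V" "v' \<in> V" for v v'
  proof (rule ex1_simple_walkI)
    show "\<exists>vs es. simple_walk {V} v v' vs es"
    proof (cases "v = v'")
      case True
      then show ?thesis by (intro exI[of _ "[v]"] exI[of _ "[]"]) (simp add: simple_walk_def)
    next
      case False
      then show ?thesis using v by (intro exI[of _ "[v, v']"] exI[of _ "[V]"]) (simp add: simple_walk_def)
    qed
  next
    fix vs es vs' es'
    assume "simple_walk {V} v v' vs es" "simple_walk {V} v v' vs' es'"
    then show "vs = vs' \<and> es = es'"
      using simple_walk_single_edge[of V v v' vs es] simple_walk_single_edge[of V v v' vs' es'] by simp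
  qed
  then show ?thesis using assms unfolding hypertree_on_def by auto
qed

section \<open>Hypertrees carrying partial conjugations\<close>

definition carries_on :: "nat set \<Rightarrow> nat set set \<Rightarrow> nat \<Rightarrow> nat set \<Rightarrow> bool" where
  "carries_on V E i D \<longleftrightarrow>
     (\<forall>d\<in>D. \<forall>j\<in>V - (D \<union> {i}). \<forall>vs es. simple_walk E d j vs es \<longrightarrow> i \<in> set vs)"

lemma carries_eq_carries_on: "carries n E i D = carries_on {1..n} E i D"
  by (simp add: carries_def carries_on_def)

lemma carries_on_complement:
  assumes "F \<subseteq> V - {k}"
  shows "carries_on V E k (V - {k} - F) \<longleftrightarrow> carries_on V E k F"
proof -
  have flip: "carries_on V E k (V - {k} - X)" if "carries_on V E k X" for X
    unfolding carries_on_def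
  proof (intro ballI allI impI)
    fix d j vs es assume "d \<in> V - {k} - X" "j \<in> V - (V - {k} - X \<union> {k})" "simple_walk E d j vs es"
    then show "k \<in> set vs"
      using that simple_walk_rev unfolding carries_on_def by fastforce
  qed
  have "V - {k} - (V - {k} - F) = F" using assms by auto
  then show ?thesis using flip[of F] flip[of "V - {k} - F"] by auto
qed

lemma carries_on_pc_side:
  "F \<subseteq> V - {k} \<Longrightarrow> carries_on V E k (pc_side V k F l) \<longleftrightarrow> carries_on V E k F"
  by (simp add: pc_side_def carries_on_complement)

lemma pc_side_Int: "A \<subseteq> V \<Longrightarrow> l \<in> A \<Longrightarrow> pc_side A k (F \<inter> A) l = pc_side V k F l \<inter> A"
  unfolding pc_side_def by auto

lemma pc_compatible_Int:
  "A \<subseteq> V \<Longrightarrow> k \<in> A \<Longrightarrow> l \<in> A \<Longrightarrow> pc_compatible V k F l G \<Longrightarrow>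
    pc_compatible A k (F \<inter> A) l (G \<inter> A)"
  unfolding pc_compatible_def using pc_side_Int[of A V l k F] pc_side_Int[of A V k l G] by auto

lemma pc_compatible_pc_side_subset:
  "pc_compatible V i D k F \<Longrightarrow> i \<noteq> k \<Longrightarrow> F \<subseteq> V - {k} \<Longrightarrow> pc_side V k F i \<subseteq> V - pc_side V i D k"
  unfolding pc_compatible_def using pc_side_subset[of F V k i] by auto

lemma carries_on_union_centre:
  assumes ht1: "hypertree_on A E1" and ht2: "hypertree_on B E2" and AB: "A \<inter> B = {i}"
    and F: "F \<subseteq> A \<union> B" and c1: "carries_on A E1 i (F \<inter> A)" and c2: "carries_on B E2 i (F \<inter> B)"
  shows "carries_on (A \<union> B) (E1 \<union> E2) i F"
  unfolding carries_on_def
proof (intro ballI allI impI)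
  note g = hypertree_on_cut_vertex_split[OF ht1 ht2 AB]
  note g' = cut_vertex_split_swap[OF g]
  fix d j vs es
  assume d: "d \<in> F" and j: "j \<in> A \<union> B - (F \<union> {i})" and W: "simple_walk (E1 \<union> E2) d j vs es"
  have W': "simple_walk (E2 \<union> E1) d j vs es" using W by (simp add: Un_commute)
  have "vs ! s \<in> set vs" if "s \<le> length es" for s
    using that simple_walk_nthD(1)[OF W] by simp
  then consider "d \<in> A" "j \<in> A" | "d \<in> B" "j \<in> B" | "i \<in> set vs"
    using cut_vertex_split.walk_meets_cut_vertex[OF g W] cut_vertex_split.walk_meets_cut_vertex[OF g' W']
      d F j by blast
  then show "i \<in> set vs"
  proof cases
    case 1
    then show ?thesis
      using cut_vertex_split.walk_within_side[OF g W] c1 d j unfolding carries_on_def by blast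
  next
    case 2
    then show ?thesis
      using cut_vertex_split.walk_within_side[OF g' W'] c2 d j unfolding carries_on_def by blast
  qed
qed

lemma carries_on_union_off_centre:
  assumes ht1: "hypertree_on A E1" and ht2: "hypertree_on B E2" and AB: "A \<inter> B = {i}"
    and k: "k \<in> A" "k \<noteq> i" and F: "F \<subseteq> A \<union> B - {k}"
    and side: "pc_side (A \<union> B) k F i \<subseteq> A" and c1: "carries_on A E1 k (F \<inter> A)"
  shows "carries_on (A \<union> B) (E1 \<union> E2) k F"
proof -
  let ?S = "pc_side (A \<union> B) k F i"
  note g = hypertree_on_cut_vertex_split[OF ht1 ht2 AB]
  have S: "?S \<subseteq> A - {i, k}" using side not_in_pc_side pc_side_subset[OF F] by blast
  have "?S = pc_side A k (F \<inter> A) i" using pc_side_Int[of A "A \<union> B" i k F] side AB by auto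
  then have cS: "carries_on A E1 k ?S"
    using carries_on_pc_side[of "F \<inter> A" A k E1 i] c1 F by auto
  have "carries_on (A \<union> B) (E1 \<union> E2) k ?S"
    unfolding carries_on_def
  proof (intro ballI allI impI)
    fix d j vs es
    assume d: "d \<in> ?S" and j: "j \<in> A \<union> B - (?S \<union> {k})" and W: "simple_walk (E1 \<union> E2) d j vs es"
    show "k \<in> set vs"
    proof (cases "j \<in> A")
      case True
      then show ?thesis
        using cut_vertex_split.walk_within_side[OF g W] cS d j S unfolding carries_on_def by blast
    next
      case False
      then obtain s where s: "s \<le> length es" "vs ! s = i"
        using cut_vertex_split.walk_meets_cut_vertex[OF g W] d S by blast
      have "simple_walk E1 d i (take (Suc s) vs) (take s es)"
        using cut_vertex_split.walk_within_side[OF g simple_walk_split(1)[OF W s]] d S AB by blast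
      then have "k \<in> set (take (Suc s) vs)"
        using cS d S AB k unfolding carries_on_def by blast
      then show ?thesis using in_set_takeD by fast
    qed
  qed
  then show ?thesis using carries_on_pc_side[OF F] by blast
qed

lemma carries_on_union_split:
  assumes ht1: "hypertree_on (insert i D) E1" and ht2: "hypertree_on (V - D) E2"
    and iD: "i \<in> V" "D \<subseteq> V - {i}" and kF: "k \<in> V" "F \<subseteq> V - {k}"
    and compat: "pc_compatible V i D k F"
    and c1: "k \<in> insert i D \<Longrightarrow> carries_on (insert i D) E1 k (F \<inter> insert i D)"
    and c2: "k \<in> V - D \<Longrightarrow> carries_on (V - D) E2 k (F \<inter> (V - D))"
  shows "carries_on V (E1 \<union> E2) k F"
proof -
  have AB: "insert i D \<inter> (V - D) = {i}" and V: "insert i D \<union> (V - D) = V" using iD by auto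
  consider "k = i" | "k \<in> D" | "k \<in> V - D" "k \<noteq> i" using kF by blast
  then show ?thesis
  proof cases
    case 1
    have "carries_on (insert i D \<union> (V - D)) (E1 \<union> E2) i F"
      using kF iD c1 c2 V 1 by (intro carries_on_union_centre[OF ht1 ht2 AB]) auto
    then show ?thesis using V 1 by simp
  next
    case 2
    then have "i \<noteq> k" using iD by auto
    then have "pc_side V k F i \<subseteq> insert i D"
      using pc_compatible_pc_side_subset[OF compat _ kF(2)] 2 iD pc_side_subset[OF kF(2)]
      by (auto simp: pc_side_def)
    then have "carries_on (insert i D \<union> (V - D)) (E1 \<union> E2) k F"
      using 2 kF c1 V \<open>i \<noteq> k\<close> by (intro carries_on_union_off_centre[OF ht1 ht2 AB]) auto
    then show ?thesis using V by simp
  next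
    case 3
    then have "pc_side V k F i \<subseteq> V - D"
      using pc_compatible_pc_side_subset[OF compat _ kF(2)] pc_side_subset[OF kF(2)]
      by (auto simp: pc_side_def)
    moreover have "(V - D) \<inter> insert i D = {i}" "(V - D) \<union> insert i D = V" using iD by auto
    ultimately have "carries_on (V - D \<union> insert i D) (E2 \<union> E1) k F"
      using 3 kF c2 by (intro carries_on_union_off_centre[OF ht2 ht1]) auto
    then show ?thesis using V by (simp add: Un_commute)
  qed
qed

lemma card_cut_parts:
  assumes "finite V" "i \<in> V" "D \<subseteq> V - {i}" "x \<in> V - {i} - D" "y \<in> D"
  shows "card (insert i D) < card V" "card (V - D) < card V"
    "2 \<le> card (insert i D)" "2 \<le> card (V - D)"
proof -
  show "card (insert i D) < card V" "card (V - D) < card V"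
    using assms by (auto intro!: psubset_card_mono)
  have "y \<noteq> i" using assms(3,5) by auto
  then have "finite (insert i D)" "finite (V - D)" "{i, y} \<subseteq> insert i D" "{i, x} \<subseteq> V - D"
    "card {i, y} = 2" "card {i, x} = 2"
    using assms finite_subset by auto
  then show "2 \<le> card (insert i D)" "2 \<le> card (V - D)"
    using card_mono by metis+
qed

definition restrict_family :: "(nat \<times> nat set) set \<Rightarrow> nat set \<Rightarrow> (nat \<times> nat set) set" where
  "restrict_family S A = {(k, F \<inter> A) | k F. (k, F) \<in> S \<and> k \<in> A}"

lemma restrict_family_subset:
  "\<forall>(k, F)\<in>S. k \<in> V \<and> F \<subseteq> V - {k} \<Longrightarrow> \<forall>(k, F)\<in>restrict_family S A. k \<in> A \<and> F \<subseteq> A - {k}"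
  by (auto simp: restrict_family_def)

lemma restrict_family_pc_compatible:
  "A \<subseteq> V \<Longrightarrow> \<forall>(k, F)\<in>S. \<forall>(l, G)\<in>S. pc_compatible V k F l G \<Longrightarrow>
    \<forall>(k, F)\<in>restrict_family S A. \<forall>(l, G)\<in>restrict_family S A. pc_compatible A k F l G"
  using pc_compatible_Int[of A V] by (fastforce simp: restrict_family_def)

lemma hypertree_on_union_carrying:
  assumes iD: "(i, D) \<in> S" and fam: "\<forall>(k, F)\<in>S. k \<in> V \<and> F \<subseteq> V - {k}"
    and compat: "\<forall>(k, F)\<in>S. \<forall>(l, G)\<in>S. pc_compatible V k F l G"
    and E1: "hypertree_on (insert i D) E1" "\<forall>(k, F)\<in>restrict_family S (insert i D). carries_on (insert i D) E1 k F"
    and E2: "hypertree_on (V - D) E2" "\<forall>(k, F)\<in>restrict_family S (V - D). carries_on (V - D) E2 k F"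
  shows "hypertree_on V (E1 \<union> E2) \<and> (\<forall>(k, F)\<in>S. carries_on V (E1 \<union> E2) k F)"
proof
  have iV: "i \<in> V" "D \<subseteq> V - {i}" using iD fam by auto
  then have "insert i D \<inter> (V - D) = {i}" "insert i D \<union> (V - D) = V" by auto
  then show "hypertree_on V (E1 \<union> E2)" using hypertree_on_union[OF E1(1) E2(1)] by simp
  show "\<forall>(k, F)\<in>S. carries_on V (E1 \<union> E2) k F"
  proof (intro ballI, clarify)
    fix k F assume kF: "(k, F) \<in> S"
    show "carries_on V (E1 \<union> E2) k F"
    proof (rule carries_on_union_split[OF E1(1) E2(1) iV])
      show "k \<in> V" "F \<subseteq> V - {k}" using kF fam by auto
      show "pc_compatible V i D k F" using compat iD kF by fastforce
      show "carries_on (insert i D) E1 k (F \<inter> insert i D)" if "k \<in> insert i D"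
        using E1(2) kF that unfolding restrict_family_def by blast
      show "carries_on (V - D) E2 k (F \<inter> (V - D))" if "k \<in> V - D"
        using E2(2) kF that unfolding restrict_family_def by blast
    qed
  qed
qed

lemma ex_hypertree_on_carrying:
  assumes "finite V" "card V \<ge> 2" "\<forall>(k, F)\<in>S. k \<in> V \<and> F \<subseteq> V - {k}"
    "\<forall>(k, F)\<in>S. \<forall>(l, G)\<in>S. pc_compatible V k F l G"
  shows "\<exists>E. hypertree_on V E \<and> (\<forall>(k, F)\<in>S. carries_on V E k F)"
  using assms
proof (induction "card V" arbitrary: V S rule: less_induct)
  case less
  show ?case
  proof (cases "\<exists>(i, D)\<in>S. D \<noteq> {} \<and> V - {i} - D \<noteq> {}")
    case False
    then have "carries_on V {V} k F" if "(k, F) \<in> S" for k F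
      using that unfolding carries_on_def by auto
    then show ?thesis using hypertree_on_single_edge[OF less.prems(2)] by blast
  next
    case True
    then obtain i D x y where iD: "(i, D) \<in> S" and x: "x \<in> V - {i} - D" and y: "y \<in> D" by blast
    have iV: "i \<in> V" "D \<subseteq> V - {i}" using iD less.prems(3) by auto
    note card = card_cut_parts[OF less.prems(1) iV x y]
    have parts: "insert i D \<subseteq> V" "V - D \<subseteq> V" "finite (insert i D)" "finite (V - D)"
      using iV less.prems(1) finite_subset by auto
    obtain E1 where E1: "hypertree_on (insert i D) E1"
        "\<forall>(k, F)\<in>restrict_family S (insert i D). carries_on (insert i D) E1 k F"
      using less.hyps[OF card(1) parts(3) card(3) restrict_family_subset[OF less.prems(3)]
          restrict_family_pc_compatible[OF parts(1) less.prems(4)]] by blast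
    obtain E2 where E2: "hypertree_on (V - D) E2"
        "\<forall>(k, F)\<in>restrict_family S (V - D). carries_on (V - D) E2 k F"
      using less.hyps[OF card(2) parts(4) card(4) restrict_family_subset[OF less.prems(3)]
          restrict_family_pc_compatible[OF parts(2) less.prems(4)]] by blast
    show ?thesis using hypertree_on_union_carrying[OF iD less.prems(3,4) E1 E2] by blast
  qed
qed

lemma carries_on_imp_pc_compatible:
  assumes ht: "hypertree_on V E" and ci: "carries_on V E i D" and ck: "carries_on V E k F"
    and iD: "i \<in> V" "D \<subseteq> V - {i}" and kF: "k \<in> V" "F \<subseteq> V - {k}"
  shows "pc_compatible V i D k F"
proof (rule ccontr)
  assume "\<not> pc_compatible V i D k F"
  then obtain d where ik: "i \<noteq> k" and d: "d \<in> pc_side V i D k" "d \<in> pc_side V k F i"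
    unfolding pc_compatible_def by auto
  have ci': "carries_on V E i (pc_side V i D k)" and ck': "carries_on V E k (pc_side V k F i)"
    using ci ck carries_on_pc_side[OF iD(2)] carries_on_pc_side[OF kF(2)] by auto
  have dV: "d \<in> V" using d(1) pc_side_subset[OF iD(2)] by auto
  obtain vs es where W: "simple_walk E d k vs es" using hypertree_on_ex_walk[OF ht dV kF(1)] by blast
  note b = simple_walk_nthD[OF W]
  have "i \<in> set vs" using ci' d(1) W kF(1) ik not_in_pc_side unfolding carries_on_def by blast
  then obtain s where s: "s < length vs" "vs ! s = i" by (auto simp: in_set_conv_nth)
  have sL: "s \<le> length es" "s \<noteq> length es" using s b ik by auto
  have "simple_walk E d i (take (Suc s) vs) (take s es)" using simple_walk_split(1)[OF W sL(1) s(2)] .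
  then have "k \<in> set (take (Suc s) vs)"
    using ck' d(2) iD(1) ik not_in_pc_side unfolding carries_on_def by blast
  then obtain r where r: "r < Suc s" "vs ! r = k" by (auto simp: in_set_conv_nth)
  have "r = length es" using r b s nth_eq_iff_index_eq[of vs r "length es"] by auto
  then show False using r sL by auto
qed

lemma ex_hypertree_on_carrying_iff_pc_compatible:
  assumes "finite V" "card V \<ge> 2" and fam: "\<forall>(k, F)\<in>S. k \<in> V \<and> F \<subseteq> V - {k}"
  shows "(\<exists>E. hypertree_on V E \<and> (\<forall>(k, F)\<in>S. carries_on V E k F)) \<longleftrightarrow>
         (\<forall>(k, F)\<in>S. \<forall>(l, G)\<in>S. pc_compatible V k F l G)"
proof
  assume "\<exists>E. hypertree_on V E \<and> (\<forall>(k, F)\<in>S. carries_on V E k F)"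
  then obtain E where E: "hypertree_on V E" "\<forall>(k, F)\<in>S. carries_on V E k F" by blast
  show "\<forall>(k, F)\<in>S. \<forall>(l, G)\<in>S. pc_compatible V k F l G"
  proof (intro ballI, clarify)
    fix i D k F assume p: "(i, D) \<in> S" "(k, F) \<in> S"
    have "carries_on V E i D" "carries_on V E k F" using E(2) p by auto
    moreover have "i \<in> V" "D \<subseteq> V - {i}" "k \<in> V" "F \<subseteq> V - {k}" using fam p by auto
    ultimately show "pc_compatible V i D k F" by (rule carries_on_imp_pc_compatible[OF E(1)])
  qed
qed (use ex_hypertree_on_carrying[OF assms] in blast)

theorem theorem3p6:
  fixes n :: nat and ps :: "(nat \<times> nat set) list"
  assumes "n \<ge> 3"
    and "\<forall>(i, D) \<in> set ps. is_partial_conj n i D"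
  shows "(\<exists>\<Theta>. hypertree n \<Theta> \<and> (\<forall>(i, D) \<in> set ps. carries n \<Theta> i D)) \<longleftrightarrow>
         (\<forall>(i, D) \<in> set ps. \<forall>(k, F) \<in> set ps. commute_out n i D k F)"
proof -
  have fam: "\<forall>(k, F) \<in> set ps. k \<in> {1..n} \<and> F \<subseteq> {1..n} - {k}"
    using assms(2) unfolding is_partial_conj_def by auto
  have "(\<forall>(i, D) \<in> set ps. \<forall>(k, F) \<in> set ps. commute_out n i D k F) \<longleftrightarrow>
        (\<forall>(i, D) \<in> set ps. \<forall>(k, F) \<in> set ps. pc_compatible {1..n} i D k F)"
    using assms(2) commute_out_iff_pc_compatible by fast
  moreover have "card {1..n} \<ge> 2" using assms(1) by simp
  ultimately show ?thesis
    using ex_hypertree_on_carrying_iff_pc_compatible[OF _ _ fam]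
    unfolding hypertree_eq_hypertree_on carries_eq_carries_on by simp
qed

end
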